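(* Let $\psi(t,b_1,b_3)$ be a function satisfying, for all values of its arguments, (R1) $\psi(qt,b_1,b_3)=b_1\psi(t,b_1,b_3)+(1-b_1)\psi(qt,b_1/q,b_3)$, (R2) $b_3\psi(qt,b_1,b_3)=\psi(t,b_1,b_3)+(b_3-1)\psi(t,b_1,qb_3)$, (R3) $qtb_1b_3\psi(qt,b_1,b_3)=(qtb_1-1)\psi(t,b_1,b_3)+\psi(t,qb_1,b_3)$, (R4) $qt\psi(qt,b_1,b_3)=(qtb_1-1)\psi(t,b_1,b_3)+\psi(qt,b_1,b_3/q)$. Fix $b_1,b_3$ and define $$f(t)=qtb_3(1-b_1)\frac{\psi(qt,b_1/q,qb_3)}{\psi(t,b_1,qb_3)},\qquad g(t)=-\frac{\psi(t,b_1,b_3)}{\psi(t,b_1,qb_3)}.$$ Then $(f,g)$ is a solution of dP$(A_4^{(1)})[b_1,1,b_3]$, i.e. of the system below with $b_2=1$.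
   Context: $q$ is a fixed nonzero complex constant (generic, e.g. not a root of unity); all parameters are generic so that all denominators appearing are nonzero. For parameters $b_1,b_2,b_3$, the equation dP$(A_4^{(1)})[b_1,b_2,b_3]$ is the system for functions $f(t),g(t)$, with $\overline{f}=f(qt)$, $\overline{g}=g(qt)$ and $s=s(t)=\frac{1}{qb_1b_2b_3t}$: $$\overline{g}\,g=\frac{qt}{b_2}\,\frac{(f+b_3)(f+1)}{f+1/s},\qquad \overline{f}\,f=\frac{1}{s}\,\frac{(\overline{g}+1/b_2)(\overline{g}+1/(b_1b_2))}{\overline{g}+qt/b_2},$$ required to hold for all $t$. *)

theory Defs
  imports Complex_Main
begin

definition dPs :: "complex \<Rightarrow> complex \<Rightarrow> complex \<Rightarrow> complex \<Rightarrow> complex \<Rightarrow> complex" where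
  "dPs q b1 b2 b3 t = 1 / (q * b1 * b2 * b3 * t)"

definition dPA4_at :: "complex \<Rightarrow> complex \<Rightarrow> complex \<Rightarrow> complex \<Rightarrow>
    (complex \<Rightarrow> complex) \<Rightarrow> (complex \<Rightarrow> complex) \<Rightarrow> complex \<Rightarrow> bool" where
  "dPA4_at q b1 b2 b3 f g t \<longleftrightarrow>
     (let s = dPs q b1 b2 b3 t in
       g (q * t) * g t = (q * t / b2) * ((f t + b3) * (f t + 1) / (f t + 1 / s)) \<and>
       f (q * t) * f t = (1 / s) * ((g (q * t) + 1 / b2) * (g (q * t) + 1 / (b1 * b2))
                                    / (g (q * t) + q * t / b2)))"

end

theory Submission
  imports Defs
begin

text \<open>The pair (\<psi>(t,b1,b3), \<psi>(t,b1,q b3)) evolves linearly under t \<mapsto> q t (by R2 and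
  R4), so their ratio \<rho> satisfies a discrete Riccati equation. R1 turns the numerator of f
  into \<psi>-values at the same parameters, giving f = \<rho> - 1 and g = -\<rho>; on such pairs both
  equations of dP(A4^(1))[b1,1,b3] reduce to the Riccati equation.\<close>

lemma inverse_dPs: "1 / dPs q b1 b2 b3 t = q * b1 * b2 * b3 * t"
  by (simp add: dPs_def)

lemma dPA4_at_Riccati_solution:
  fixes q b1 b3 t :: complex and \<rho> f g :: "complex \<Rightarrow> complex"
  assumes b1_nz: "b1 \<noteq> 0"
    and f: "f t = \<rho> t - 1" "f (q*t) = \<rho> (q*t) - 1"
    and g: "g t = - \<rho> t" "g (q*t) = - \<rho> (q*t)"
    and Riccati: "\<rho> (q*t) * (q*t*b1*b3 - 1 + \<rho> t) = q*t * (\<rho> t + b3 - 1)"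
    and den_f: "f t + 1 / dPs q b1 1 b3 t \<noteq> 0"
    and den_g: "g (q*t) + q*t \<noteq> 0"
  shows "dPA4_at q b1 1 b3 f g t"
proof -
  define x y where "x = \<rho> t" and "y = \<rho> (q*t)"
  define D where "D = q*t*b1*b3 - 1 + x"
  have D_nz: "D \<noteq> 0"
    using den_f by (simp add: D_def f inverse_dPs x_def algebra_simps)
  have y_D: "y * D = q*t * (x + b3 - 1)"
    using Riccati by (simp add: D_def x_def y_def)
  have "q*t - y \<noteq> 0"
    using den_g by (simp add: g y_def)
  have "(1 - b1*y) * (q*b3*t) * D = (1 - x) * (q*t - y) * D"
    using y_D unfolding D_def by algebra
  then have "(1 - b1*y) * (q*b3*t) = (1 - x) * (q*t - y)"
    using D_nz by simp
  then have E2: "(y - 1) * (x - 1) = q*b1*b3*t * ((1 - y) * (1/b1 - y) / (q*t - y))"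
    using \<open>q*t - y \<noteq> 0\<close> b1_nz by (simp add: field_simps) algebra
  have E1: "y * x = q*t * ((x - 1 + b3) * x / (x - 1 + q*b1*b3*t))"
    using y_D D_nz unfolding D_def by (simp add: field_simps) algebra
  show ?thesis
    unfolding dPA4_at_def Let_def inverse_dPs f g x_def[symmetric] y_def[symmetric]
    using E1 E2 by simp
qed

locale contiguous_family =
  fixes q :: complex and \<psi> :: "complex \<Rightarrow> complex \<Rightarrow> complex \<Rightarrow> complex"
  assumes q_nz: "q \<noteq> 0"
    and down_a1: "\<And>t a1 a3. \<psi> (q*t) a1 a3 = a1 * \<psi> t a1 a3 + (1 - a1) * \<psi> (q*t) (a1/q) a3"
    and up_a3: "\<And>t a1 a3. a3 * \<psi> (q*t) a1 a3 = \<psi> t a1 a3 + (a3 - 1) * \<psi> t a1 (q*a3)"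
    and down_a3: "\<And>t a1 a3. q*t * \<psi> (q*t) a1 a3 = (q*t*a1 - 1) * \<psi> t a1 a3 + \<psi> (q*t) a1 (a3/q)"
begin

definition ratio :: "complex \<Rightarrow> complex \<Rightarrow> complex \<Rightarrow> complex" where
  "ratio a1 a3 t = \<psi> t a1 a3 / \<psi> t a1 (q*a3)"

lemma step_qa3: "q*t*a3 * \<psi> (q*t) a1 (q*a3) = \<psi> t a1 a3 + (q*t*a1*a3 - 1) * \<psi> t a1 (q*a3)"
proof -
  have "q*t * \<psi> (q*t) a1 (q*a3) = (q*t*a1 - 1) * \<psi> t a1 (q*a3) + \<psi> (q*t) a1 a3"
    using down_a3[of t a1 "q*a3"] q_nz by simp
  then show ?thesis
    using up_a3[of a3 t a1] by algebra
qed

lemma lowered_a1_eq: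
  "q*t*a3 * (1 - a1) * \<psi> (q*t) (a1/q) (q*a3) = \<psi> t a1 a3 - \<psi> t a1 (q*a3)"
  using down_a1[of t a1 "q*a3"] step_qa3[of t a3 a1] by algebra

lemma lowered_a1_ratio:
  assumes "\<psi> t a1 (q*a3) \<noteq> 0"
  shows "q*t*a3*(1 - a1) * (\<psi> (q*t) (a1/q) (q*a3) / \<psi> t a1 (q*a3)) = ratio a1 a3 t - 1"
  using lowered_a1_eq[of t a3 a1] assms by (simp add: ratio_def field_simps)

lemma ratio_Riccati:
  assumes "\<psi> t a1 (q*a3) \<noteq> 0" and "\<psi> (q*t) a1 (q*a3) \<noteq> 0"
  shows "ratio a1 a3 (q*t) * (q*t*a1*a3 - 1 + ratio a1 a3 t) = q*t * (ratio a1 a3 t + a3 - 1)"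
  using step_qa3[of t a3 a1] up_a3[of a3 t a1] assms
  by (simp add: ratio_def field_simps) algebra

end

theorem proposition2p1:
  fixes q b1 b3 t :: complex
    and \<psi> :: "complex \<Rightarrow> complex \<Rightarrow> complex \<Rightarrow> complex"
    and f g :: "complex \<Rightarrow> complex"
  assumes q_nz: "q \<noteq> 0"
    and q_not_root: "\<And>n::nat. n > 0 \<Longrightarrow> q ^ n \<noteq> 1"
    and R1: "\<And>t a1 a3. \<psi> (q*t) a1 a3 = a1 * \<psi> t a1 a3 + (1 - a1) * \<psi> (q*t) (a1/q) a3"
    and R2: "\<And>t a1 a3. a3 * \<psi> (q*t) a1 a3 = \<psi> t a1 a3 + (a3 - 1) * \<psi> t a1 (q*a3)"
    and R3: "\<And>t a1 a3. q*t*a1*a3 * \<psi> (q*t) a1 a3 = (q*t*a1 - 1) * \<psi> t a1 a3 + \<psi> t (q*a1) a3"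
    and R4: "\<And>t a1 a3. q*t * \<psi> (q*t) a1 a3 = (q*t*a1 - 1) * \<psi> t a1 a3 + \<psi> (q*t) a1 (a3/q)"
    and f_def: "\<And>t. f t = q*t*b3*(1 - b1) * (\<psi> (q*t) (b1/q) (q*b3) / \<psi> t b1 (q*b3))"
    and g_def: "\<And>t. g t = - (\<psi> t b1 b3 / \<psi> t b1 (q*b3))"
    and b1_nz: "b1 \<noteq> 0" and b3_nz: "b3 \<noteq> 0" and t_nz: "t \<noteq> 0"
    and den1: "\<psi> t b1 (q*b3) \<noteq> 0"
    and den2: "\<psi> (q*t) b1 (q*b3) \<noteq> 0"
    and den3: "f t + 1 / dPs q b1 1 b3 t \<noteq> 0"
    and den4: "g (q*t) + q*t \<noteq> 0"
  shows "dPA4_at q b1 1 b3 f g t"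
proof -
  interpret contiguous_family q \<psi>
    using q_nz R1 R2 R4 by unfold_locales
  let ?\<rho> = "ratio b1 b3"
  have f: "f t = ?\<rho> t - 1" "f (q*t) = ?\<rho> (q*t) - 1"
    using lowered_a1_ratio[OF den1] lowered_a1_ratio[OF den2] f_def[of t] f_def[of "q*t"]
    by (simp_all add: mult.assoc)
  have g: "g t = - ?\<rho> t" "g (q*t) = - ?\<rho> (q*t)"
    by (simp_all add: g_def ratio_def)
  show ?thesis
    using dPA4_at_Riccati_solution[OF b1_nz f g ratio_Riccati[OF den1 den2] den3 den4] .
qed

end
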